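(* Let $\Phi=B_n$ or $D_n$, and let $D\subset\Phi^+$ be an orthogonal subset satisfying Assumption (A) with $D\cap\mathcal C_1=\{\varepsilon_1-\varepsilon_j,\varepsilon_1+\varepsilon_j\}$ for some $1<j\le n$. Let $\tilde\Phi^+$ be the set of roots of $\Phi^+$ involving neither $\varepsilon_1$ nor $\varepsilon_j$ (i.e. $\Phi^+\setminus(\mathcal C_1\cup\mathcal C_j\cup\mathcal R_j\cup\mathcal R_{-j})$), $\tilde D=D\cap\tilde\Phi^+$, $\tilde\sigma=\prod_{\beta\in\tilde D}r_\beta$, and $l'(\tilde\sigma)=\#\{\alpha\in\tilde\Phi^+:\tilde\sigma(\alpha)\notin\tilde\Phi^+\}$. Then $$l(\sigma)=l'(\tilde\sigma)+|\mathcal C_1|+|\mathcal C_j|+4\,\#\{(l,s):1<l<s<j,\ \varepsilon_l+\varepsilon_s\in\tilde D\}+2\,\#\{(l,s):1<l<j<s,\ \varepsilon_l-\varepsilon_s,\varepsilon_l+\varepsilon_s\in\tilde D\}+2\,\#\{l:1<l<j,\ \varepsilon_l\in\tilde D\}.$$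
   Context: Let $\Phi$ be a root system of type $B_n$, $C_n$ or $D_n$ in $\mathbb R^n$ with standard basis $\varepsilon_1,\dots,\varepsilon_n$ and positive roots $\Phi^+=\{\varepsilon_i\pm\varepsilon_j:1\le i<j\le n\}\cup\Phi_1^+$, where $\Phi_1^+=\emptyset$ for $D_n$, $\{\varepsilon_i\}$ for $B_n$, $\{2\varepsilon_i\}$ for $C_n$. $D\subset\Phi^+$ is orthogonal if its roots are pairwise orthogonal. Assumption (A): if $\Phi=B_n$, $D$ contains at most one root of the form $\varepsilon_i$; if $\Phi=C_n$, $D$ does not contain both $\varepsilon_i-\varepsilon_j$ and $\varepsilon_i+\varepsilon_j$ for any $i<j$. $r_\beta$ denotes the reflection in the hyperplane orthogonal to $\beta$, $\sigma=\prod_{\beta\in D}r_\beta$, and $l(\sigma)=\#\{\alpha\in\Phi^+:\sigma(\alpha)\in-\Phi^+\}$ (the length of $\sigma$ in the Weyl group). $\mathrm{col}(\varepsilon_i\pm\varepsilon_j)=\mathrm{col}(\varepsilon_i)=i$; $\mathrm{row}(\varepsilon_i\pm\varepsilon_j)=\mp j$, $\mathrm{row}(\varepsilon_i)=0$; $\mathcal R_i=\{\alpha\in\Phi^+:\mathrm{row}(\alpha)=i\}$, $\mathcal C_j=\{\alpha\in\Phi^+:\mathrm{col}(\alpha)=j\}$. *)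

theory Defs
  imports Complex_Main
begin

text \<open>Vectors of R^n are represented as functions nat => real, coordinates 1..n
  (all roots vanish outside {1..n}).\<close>

datatype rtype = TypeB | TypeC | TypeD

definition eps :: "nat \<Rightarrow> nat \<Rightarrow> real" where
  "eps i = (\<lambda>k. if k = i then 1 else 0)"

definition inner_n :: "nat \<Rightarrow> (nat \<Rightarrow> real) \<Rightarrow> (nat \<Rightarrow> real) \<Rightarrow> real" where
  "inner_n n u v = (\<Sum>k\<in>{1..n}. u k * v k)"

definition short_roots :: "rtype \<Rightarrow> nat \<Rightarrow> (nat \<Rightarrow> real) set" where
  "short_roots t n = (case t of
      TypeB \<Rightarrow> {eps i | i. 1 \<le> i \<and> i \<le> n}
    | TypeC \<Rightarrow> {(\<lambda>k. 2 * eps i k) | i. 1 \<le> i \<and> i \<le> n}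
    | TypeD \<Rightarrow> {})"

definition pos_roots :: "rtype \<Rightarrow> nat \<Rightarrow> (nat \<Rightarrow> real) set" where
  "pos_roots t n =
     {(\<lambda>k. eps i k - eps j k) | i j. 1 \<le> i \<and> i < j \<and> j \<le> n}
   \<union> {(\<lambda>k. eps i k + eps j k) | i j. 1 \<le> i \<and> i < j \<and> j \<le> n}
   \<union> short_roots t n"

definition orthogonal_set :: "nat \<Rightarrow> (nat \<Rightarrow> real) set \<Rightarrow> bool" where
  "orthogonal_set n D \<longleftrightarrow> (\<forall>\<alpha>\<in>D. \<forall>\<beta>\<in>D. \<alpha> \<noteq> \<beta> \<longrightarrow> inner_n n \<alpha> \<beta> = 0)"

definition assumption_A :: "rtype \<Rightarrow> nat \<Rightarrow> (nat \<Rightarrow> real) set \<Rightarrow> bool" where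
  "assumption_A t n D \<longleftrightarrow>
     (t = TypeB \<longrightarrow> card (D \<inter> {eps i | i. 1 \<le> i \<and> i \<le> n}) \<le> 1) \<and>
     (t = TypeC \<longrightarrow> (\<forall>i j. 1 \<le> i \<and> i < j \<and> j \<le> n \<longrightarrow>
         \<not> ((\<lambda>k. eps i k - eps j k) \<in> D \<and> (\<lambda>k. eps i k + eps j k) \<in> D)))"

definition refl :: "nat \<Rightarrow> (nat \<Rightarrow> real) \<Rightarrow> (nat \<Rightarrow> real) \<Rightarrow> (nat \<Rightarrow> real)" where
  "refl n \<beta> v = (\<lambda>k. v k - (2 * inner_n n v \<beta> / inner_n n \<beta> \<beta>) * \<beta> k)"

text \<open>Product of the reflections in a (finite, orthogonal) set; the reflections commute.\<close>
definition refl_prod :: "nat \<Rightarrow> (nat \<Rightarrow> real) set \<Rightarrow> (nat \<Rightarrow> real) \<Rightarrow> (nat \<Rightarrow> real)" where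
  "refl_prod n D = Finite_Set.fold (\<lambda>\<beta> f. refl n \<beta> \<circ> f) id D"

definition weyl_length :: "rtype \<Rightarrow> nat \<Rightarrow> ((nat \<Rightarrow> real) \<Rightarrow> (nat \<Rightarrow> real)) \<Rightarrow> nat" where
  "weyl_length t n w = card {\<alpha> \<in> pos_roots t n. (\<lambda>k. - w \<alpha> k) \<in> pos_roots t n}"

definition col :: "(nat \<Rightarrow> real) \<Rightarrow> nat" where
  "col \<alpha> = (if \<exists>i j. i < j \<and> (\<alpha> = (\<lambda>k. eps i k - eps j k) \<or> \<alpha> = (\<lambda>k. eps i k + eps j k))
             then (SOME i. \<exists>j. i < j \<and> (\<alpha> = (\<lambda>k. eps i k - eps j k) \<or> \<alpha> = (\<lambda>k. eps i k + eps j k)))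
             else (SOME i. \<alpha> = eps i \<or> \<alpha> = (\<lambda>k. 2 * eps i k)))"

definition row :: "(nat \<Rightarrow> real) \<Rightarrow> int" where
  "row \<alpha> = (if \<exists>i j. i < j \<and> \<alpha> = (\<lambda>k. eps i k - eps j k)
             then int (SOME j. \<exists>i. i < j \<and> \<alpha> = (\<lambda>k. eps i k - eps j k))
             else if \<exists>i j. i < j \<and> \<alpha> = (\<lambda>k. eps i k + eps j k)
             then - int (SOME j. \<exists>i. i < j \<and> \<alpha> = (\<lambda>k. eps i k + eps j k))
             else 0)"

definition Rows :: "rtype \<Rightarrow> nat \<Rightarrow> int \<Rightarrow> (nat \<Rightarrow> real) set" where
  "Rows t n i = {\<alpha> \<in> pos_roots t n. row \<alpha> = i}"

definition Cols :: "rtype \<Rightarrow> nat \<Rightarrow> nat \<Rightarrow> (nat \<Rightarrow> real) set" where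
  "Cols t n j = {\<alpha> \<in> pos_roots t n. col \<alpha> = j}"

end

theory Submission
  imports Defs
begin

(* Reflections in orthogonal roots commute, and their product sigma is the
   simultaneous reflection v |-> v - sum_{beta in D} 2<v,beta>/<beta,beta> beta.  In
   types B and D an index m is involved in no root of D, in a single one, or in a pair
   e_a - e_b, e_a + e_b; accordingly sigma(e_m) = sign m * e_(perm m) with an
   involution perm of {1..n} and signs sign m = +-1.  So a long root e_a +- e_b is an
   inversion of sigma iff the coefficient of the smaller of perm a, perm b in its image
   is -1 (inv_cond), and a short root e_a is one iff sign a = -1.

   Since e_1 -+ e_j are in D, perm fixes 1 and j with sign -1 and preserves the other
   indices K; the reduced element agrees with sigma on K, so l' counts the same
   conditions on the roots not involving 1, j.  What remains: every root of column 1
   is an inversion; the non-inversions in column j are matched by perm with the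
   inversions (i, j, +) of row j having perm i > j; and each i in (1, j) with
   perm i < j and sign i = -1 gives two inversions (i, j, +-).  These i are exactly
   the indices covered by a root e_i, e_i + e_s, e_l + e_i (1 < l, s < j) or by a pair
   e_i -+ e_s (s > j) of D, which yields the coefficients 2, 4 and 2. *)

definition em :: "nat \<Rightarrow> nat \<Rightarrow> nat \<Rightarrow> real" where
  "em a b = (\<lambda>k. eps a k - eps b k)"

definition ep :: "nat \<Rightarrow> nat \<Rightarrow> nat \<Rightarrow> real" where
  "ep a b = (\<lambda>k. eps a k + eps b k)"

lemma eps_apply [simp]: "eps a k = (if k = a then 1 else 0)"
  by (simp add: eps_def)

lemma em_apply [simp]: "em a b k = (if k = a then 1 else 0) - (if k = b then 1 else 0)"
  by (simp add: em_def)

lemma ep_apply [simp]: "ep a b k = (if k = a then 1 else 0) + (if k = b then 1 else 0)"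
  by (simp add: ep_def)

lemma em_lam: "(\<lambda>k. eps a k - eps b k) = em a b"
  by (simp add: em_def)

lemma ep_lam: "(\<lambda>k. eps a k + eps b k) = ep a b"
  by (simp add: ep_def)

lemma eps_eq_iff [simp]: "eps a = eps b \<longleftrightarrow> a = b"
  by (metis eps_apply one_neq_zero)

lemma em_eq_iff: assumes "a \<noteq> b" shows "em a b = em c d \<longleftrightarrow> a = c \<and> b = d"
proof
  assume "em a b = em c d"
  then have "em a b a = em c d a" "em a b b = em c d b" by simp_all
  then show "a = c \<and> b = d" using assms by (auto split: if_splits)
qed simp

lemma ep_eq_iff:
  assumes "a \<noteq> b" "c \<noteq> d"
  shows "ep a b = ep c d \<longleftrightarrow> (a = c \<and> b = d) \<or> (a = d \<and> b = c)"
proof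
  assume "ep a b = ep c d"
  then have "ep a b a = ep c d a" "ep a b b = ep c d b" "ep a b c = ep c d c" by simp_all
  then show "(a = c \<and> b = d) \<or> (a = d \<and> b = c)" using assms by (auto split: if_splits)
qed (auto simp: fun_eq_iff)

lemma em_ne_ep: assumes "a \<noteq> b" shows "em a b \<noteq> ep c d" "ep c d \<noteq> em a b"
proof -
  show "em a b \<noteq> ep c d"
  proof
    assume "em a b = ep c d"
    then have "em a b b = ep c d b" by simp
    then show False using assms by (auto split: if_splits)
  qed
  then show "ep c d \<noteq> em a b" by metis
qed

lemma eps_ne_em: assumes "a \<noteq> b" shows "eps c \<noteq> em a b" "em a b \<noteq> eps c"
proof -
  show "eps c \<noteq> em a b"
  proof
    assume "eps c = em a b"
    then have "eps c b = em a b b" by simp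
    then show False using assms by (auto split: if_splits)
  qed
  then show "em a b \<noteq> eps c" by metis
qed

lemma eps_ne_ep: assumes "a \<noteq> b" shows "eps c \<noteq> ep a b" "ep a b \<noteq> eps c"
proof -
  show "eps c \<noteq> ep a b"
  proof
    assume "eps c = ep a b"
    then have "eps c b = ep a b b" "eps c a = ep a b a" by simp_all
    then show False using assms by (auto split: if_splits)
  qed
  then show "ep a b \<noteq> eps c" by metis
qed

lemma inner_comm: "inner_n n u v = inner_n n v u"
  by (simp add: inner_n_def mult.commute)

lemma inner_add: "inner_n n (\<lambda>k. u k + w k) b = inner_n n u b + inner_n n w b"
  unfolding inner_n_def by (simp add: distrib_right sum.distrib)

lemma inner_diff: "inner_n n (\<lambda>k. u k - w k) b = inner_n n u b - inner_n n w b"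
  unfolding inner_n_def by (simp add: left_diff_distrib sum_subtractf)

lemma inner_scale: "inner_n n (\<lambda>k. c * u k) b = c * inner_n n u b"
  unfolding inner_n_def by (simp add: sum_distrib_left mult.assoc)

lemma inner_sum: "inner_n n (\<lambda>k. \<Sum>g\<in>B. f g * g k) b = (\<Sum>g\<in>B. f g * inner_n n g b)"
  unfolding inner_n_def by (simp add: sum_distrib_right sum_distrib_left mult.assoc) (rule sum.swap)

lemma inner_eps_left: "inner_n n (eps a) v = (if 1 \<le> a \<and> a \<le> n then v a else 0)"
proof -
  have "inner_n n (eps a) v = (\<Sum>k\<in>{1..n}. if k = a then v k else 0)"
    unfolding inner_n_def by (rule sum.cong) auto
  then show ?thesis by (simp add: sum.delta)
qed

lemma inner_em_left: "inner_n n (em a b) v = inner_n n (eps a) v - inner_n n (eps b) v"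
  unfolding em_def by (rule inner_diff)

lemma inner_ep_left: "inner_n n (ep a b) v = inner_n n (eps a) v + inner_n n (eps b) v"
  unfolding ep_def by (rule inner_add)

lemma inner_eps_right: "inner_n n v (eps a) = (if 1 \<le> a \<and> a \<le> n then v a else 0)"
  by (simp add: inner_comm[of n v] inner_eps_left)

lemma inner_em_right: "inner_n n v (em a b) = inner_n n v (eps a) - inner_n n v (eps b)"
  by (simp add: inner_comm[of n v] inner_em_left)

lemma inner_ep_right: "inner_n n v (ep a b) = inner_n n v (eps a) + inner_n n v (eps b)"
  by (simp add: inner_comm[of n v] inner_ep_left)

lemmas inner_roots =
  inner_em_left inner_ep_left inner_eps_left inner_em_right inner_ep_right inner_eps_right

(* The simultaneous reflection in a set B of vectors,
     v |-> v - sum_{b in B} 2<v,b>/<b,b> b.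
   For an orthogonal set it is the product of the reflections (refl_prod). *)

definition refl_sum :: "nat \<Rightarrow> (nat \<Rightarrow> real) set \<Rightarrow> (nat \<Rightarrow> real) \<Rightarrow> (nat \<Rightarrow> real)" where
  "refl_sum n B v = (\<lambda>k. v k - (\<Sum>b\<in>B. 2 * inner_n n v b / inner_n n b b * b k))"

lemma inner_refl_sum:
  "inner_n n (refl_sum n B v) c
     = inner_n n v c - (\<Sum>b\<in>B. 2 * inner_n n v b / inner_n n b b * inner_n n b c)"
  unfolding refl_sum_def inner_diff inner_sum ..

lemma refl_comm:
  assumes "inner_n n b g = 0"
  shows "refl n b \<circ> refl n g = refl n g \<circ> refl n b"
proof -
  have gb: "inner_n n g b = 0" using assms by (simp add: inner_comm)
  have "refl n b (refl n g v) = refl n g (refl n b v)" for v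
    unfolding refl_def inner_diff inner_scale by (simp add: assms gb algebra_simps)
  then show ?thesis by auto
qed

lemma refl_refl_sum:
  assumes "finite B" "b \<notin> B" "\<forall>g\<in>B. inner_n n g b = 0"
  shows "refl n b (refl_sum n B v) = refl_sum n (insert b B) v"
proof -
  have "inner_n n (refl_sum n B v) b = inner_n n v b"
    using assms(3) by (simp add: inner_refl_sum)
  then show ?thesis
    unfolding refl_def using assms(1,2) by (simp add: refl_sum_def algebra_simps)
qed

lemma refl_prod_eq_refl_sum:
  assumes "finite D" "orthogonal_set n D"
  shows "refl_prod n D = refl_sum n D"
proof -
  interpret comp_fun_commute_on D "\<lambda>b f. refl n b \<circ> f"
  proof
    fix x y assume xy: "x \<in> D" "y \<in> D"
    show "(\<lambda>f. refl n y \<circ> f) \<circ> (\<lambda>f. refl n x \<circ> f) = (\<lambda>f. refl n x \<circ> f) \<circ> (\<lambda>f. refl n y \<circ> f)"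
    proof (cases "x = y")
      case False
      then have "inner_n n y x = 0" using assms(2) xy unfolding orthogonal_set_def by auto
      then have "refl n y \<circ> refl n x = refl n x \<circ> refl n y" by (rule refl_comm)
      then show ?thesis by (auto simp: fun_eq_iff)
    qed simp
  qed
  have "Finite_Set.fold (\<lambda>b f. refl n b \<circ> f) id B = refl_sum n B" if "B \<subseteq> D" for B
    using finite_subset[OF that assms(1)] that
  proof (induction B rule: finite_induct)
    case empty
    then show ?case by (simp add: refl_sum_def fun_eq_iff)
  next
    case (insert x F)
    have orth: "\<forall>g\<in>F. inner_n n g x = 0"
      using insert assms(2) unfolding orthogonal_set_def by auto
    have "Finite_Set.fold (\<lambda>b f. refl n b \<circ> f) id (insert x F)
        = refl n x \<circ> Finite_Set.fold (\<lambda>b f. refl n b \<circ> f) id F"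
      by (rule fold_insert) (use insert in auto)
    also have "\<dots> = refl n x \<circ> refl_sum n F"
      using insert.IH insert.prems by (metis insert_subset)
    also have "\<dots> = refl_sum n (insert x F)"
      using refl_refl_sum[OF insert.hyps(1,2) orth] by (auto simp: fun_eq_iff)
    finally show ?case .
  qed
  then show ?thesis unfolding refl_prod_def by simp
qed

lemma refl_sum_add: "refl_sum n D (\<lambda>k. u k + w k) = (\<lambda>k. refl_sum n D u k + refl_sum n D w k)"
  unfolding refl_sum_def inner_add
  by (simp add: add_divide_distrib distrib_left distrib_right sum.distrib fun_eq_iff)

lemma refl_sum_diff: "refl_sum n D (\<lambda>k. u k - w k) = (\<lambda>k. refl_sum n D u k - refl_sum n D w k)"
  unfolding refl_sum_def inner_diff
  by (simp add: diff_divide_distrib right_diff_distrib left_diff_distrib sum_subtractf fun_eq_iff)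

lemma refl_sum_scale: "refl_sum n D (\<lambda>k. c * u k) = (\<lambda>k. c * refl_sum n D u k)"
  unfolding refl_sum_def inner_scale
  by (simp add: sum_distrib_left right_diff_distrib fun_eq_iff mult_ac)

lemma refl_sum_em: "refl_sum n D (em a b) = (\<lambda>k. refl_sum n D (eps a) k - refl_sum n D (eps b) k)"
  unfolding em_def by (rule refl_sum_diff)

lemma refl_sum_ep: "refl_sum n D (ep a b) = (\<lambda>k. refl_sum n D (eps a) k + refl_sum n D (eps b) k)"
  unfolding ep_def by (rule refl_sum_add)

(* On an orthogonal set of non-isotropic vectors the simultaneous reflection negates
   each b in D and fixes D's orthogonal complement, hence it is an involution. *)
lemma refl_sum_invol:
  assumes "finite D" "orthogonal_set n D" "\<forall>b\<in>D. inner_n n b b \<noteq> 0"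
  shows "refl_sum n D (refl_sum n D v) = v"
proof -
  have neg: "inner_n n (refl_sum n D v) b = - inner_n n v b" if b: "b \<in> D" for b
  proof -
    have "(\<Sum>g\<in>D. 2 * inner_n n v g / inner_n n g g * inner_n n g b)
        = 2 * inner_n n v b / inner_n n b b * inner_n n b b
          + (\<Sum>g\<in>D - {b}. 2 * inner_n n v g / inner_n n g g * inner_n n g b)"
      using b assms(1) by (simp add: sum.remove)
    also have "(\<Sum>g\<in>D - {b}. 2 * inner_n n v g / inner_n n g g * inner_n n g b) = 0"
      using b assms(2) unfolding orthogonal_set_def by (intro sum.neutral) auto
    finally show ?thesis using assms(3) b by (simp add: inner_refl_sum)
  qed
  have "(\<Sum>b\<in>D. 2 * inner_n n (refl_sum n D v) b / inner_n n b b * b k)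
      = - (\<Sum>b\<in>D. 2 * inner_n n v b / inner_n n b b * b k)" for k
    by (simp add: neg sum_negf[symmetric] cong: sum.cong)
  then show ?thesis unfolding refl_sum_def[of n D "refl_sum n D v"] by (simp add: refl_sum_def fun_eq_iff)
qed

lemma scaled_eps_unique:
  assumes "(\<lambda>k. x * eps u k) = (\<lambda>k. y * eps v k)" "x \<noteq> 0"
  shows "u = v \<and> x = y"
proof -
  from fun_cong[OF assms(1), of u] have "x = y * eps v u" by simp
  then show ?thesis using assms(2) by (auto split: if_splits)
qed

definition long_root :: "nat \<times> nat \<times> bool \<Rightarrow> nat \<Rightarrow> real" where
  "long_root x = (case x of (a, b, s) \<Rightarrow> if s then ep a b else em a b)"

definition long_idx :: "nat \<Rightarrow> (nat \<times> nat \<times> bool) set" where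
  "long_idx n = {(a, b, s). 1 \<le> a \<and> a < b \<and> b \<le> n}"

definition short_set :: "rtype \<Rightarrow> nat set \<Rightarrow> (nat \<Rightarrow> real) set" where
  "short_set t A = (if t = TypeB then eps ` A else {})"

definition bsign :: "bool \<Rightarrow> real" where
  "bsign s = (if s then 1 else -1)"

lemma long_root_apply: "long_root (a, b, s) = (\<lambda>k. eps a k + bsign s * eps b k)"
  by (simp add: long_root_def bsign_def fun_eq_iff)

lemma bsign_cases: "bsign s = 1 \<or> bsign s = -1"
  by (simp add: bsign_def)

lemma pos_roots_idx:
  assumes "t \<noteq> TypeC"
  shows "pos_roots t n = long_root ` long_idx n \<union> short_set t {1..n}"
proof -
  have "long_root ` long_idx n
      = {em a b | a b. 1 \<le> a \<and> a < b \<and> b \<le> n} \<union> {ep a b | a b. 1 \<le> a \<and> a < b \<and> b \<le> n}"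
    unfolding long_idx_def long_root_def by (auto simp: image_iff split: if_splits) (metis (full_types))+
  moreover have "short_roots t n = short_set t {1..n}"
    using assms unfolding short_roots_def short_set_def by (cases t) auto
  ultimately show ?thesis unfolding pos_roots_def em_lam ep_lam by blast
qed

lemma finite_long_idx: "finite (long_idx n)"
proof -
  have "long_idx n \<subseteq> {1..n} \<times> {1..n} \<times> UNIV" unfolding long_idx_def by auto
  then show ?thesis by (rule finite_subset) auto
qed

lemma finite_long_idx_filter: "finite {x \<in> long_idx n. P x}"
  using finite_long_idx by simp

lemma long_root_inj: "inj_on long_root (long_idx n)"
  unfolding inj_on_def long_idx_def long_root_def
  by (auto simp: em_eq_iff ep_eq_iff em_ne_ep split: if_splits)

lemma long_root_ne_eps: "x \<in> long_idx n \<Longrightarrow> long_root x \<noteq> eps c"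
  unfolding long_idx_def long_root_def by (auto simp: eps_ne_em eps_ne_ep split: if_splits)

lemma short_set_filter: "{\<alpha> \<in> short_set t A. P \<alpha>} = short_set t {a \<in> A. P (eps a)}"
  unfolding short_set_def by auto

lemma card_short_set: "finite A \<Longrightarrow> card (short_set t A) = (if t = TypeB then card A else 0)"
  unfolding short_set_def by (simp add: card_image inj_on_def)

lemma card_roots_filter:
  assumes I: "I \<subseteq> long_idx n" and A: "finite A"
  shows "card {\<alpha> \<in> long_root ` I \<union> short_set t A. P \<alpha>}
       = card {x \<in> I. P (long_root x)} + card (short_set t {a \<in> A. P (eps a)})"
proof -
  have "{\<alpha> \<in> long_root ` I \<union> short_set t A. P \<alpha>}
      = long_root ` {x \<in> I. P (long_root x)} \<union> short_set t {a \<in> A. P (eps a)}"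
    by (auto simp: short_set_filter[symmetric])
  moreover have "long_root ` {x \<in> I. P (long_root x)} \<inter> short_set t {a \<in> A. P (eps a)} = {}"
    using long_root_ne_eps I unfolding short_set_def by (auto split: if_splits)
  moreover have "inj_on long_root {x \<in> I. P (long_root x)}"
    by (rule inj_on_subset[OF long_root_inj[of n]]) (use I in auto)
  moreover have "finite I" using finite_subset[OF I finite_long_idx] .
  moreover have "finite (short_set t {a \<in> A. P (eps a)})" using A unfolding short_set_def by auto
  ultimately show ?thesis by (simp add: card_Un_disjoint card_image)
qed

lemma inner_long_roots:
  assumes "1 \<le> a" "a < b" "b \<le> n" "1 \<le> c" "c < d" "d \<le> n"
  shows "inner_n n (long_root (a, b, s)) (long_root (c, d, s'))
    = (if a = c then 1 else 0) + bsign s' * (if a = d then 1 else 0)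
      + bsign s * (if b = c then 1 else 0) + bsign s * bsign s' * (if b = d then 1 else 0)"
  using assms by (cases s; cases s') (simp_all add: long_root_def bsign_def inner_roots)

lemma orth_long_roots_sharing_index:
  assumes "1 \<le> a" "a < b" "b \<le> n" "1 \<le> c" "c < d" "d \<le> n"
    and "m = a \<or> m = b" "m = c \<or> m = d"
    and "inner_n n (long_root (a, b, s)) (long_root (c, d, s')) = 0"
  shows "a = c \<and> b = d \<and> s \<noteq> s'"
  using assms(9) unfolding inner_long_roots[OF assms(1-6)]
  using assms(1-8) by (cases s; cases s') (auto simp: bsign_def split: if_splits)

lemma signed_pair_mem:
  fixes P :: "nat \<Rightarrow> nat \<Rightarrow> bool"
  assumes uv: "u \<noteq> v" and x: "x = 1 \<or> x = -1" and y: "y = 1 \<or> y = -1"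
  shows "(\<lambda>k. x * eps u k + y * eps v k) \<in> long_root ` {(a, b, s). a < b \<and> P a b} \<union> short_set t T
     \<longleftrightarrow> (u < v \<and> x = 1 \<and> P u v) \<or> (v < u \<and> y = 1 \<and> P v u)" (is "?w \<in> ?R \<longleftrightarrow> ?rhs")
proof
  assume "?w \<in> ?R"
  then consider (long) a b s where "a < b" "P a b" "?w = long_root (a, b, s)" | (short) c where "?w = eps c"
    unfolding short_set_def by (auto split: if_splits)
  then show ?rhs
  proof cases
    case long
    from fun_cong[OF long(3), of u] fun_cong[OF long(3), of v] fun_cong[OF long(3), of a]
      fun_cong[OF long(3), of b]
    show ?thesis using long(1,2) uv x y unfolding long_root_apply bsign_def by (auto split: if_splits)
  next
    case short
    from fun_cong[OF short, of u] fun_cong[OF short, of v]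
    show ?thesis using uv x y by (auto split: if_splits)
  qed
next
  assume ?rhs
  then show "?w \<in> ?R"
  proof
    assume h: "u < v \<and> x = 1 \<and> P u v"
    then have "?w = long_root (u, v, y = 1)" using y by (auto simp: long_root_apply bsign_def fun_eq_iff)
    then show ?thesis using h by auto
  next
    assume h: "v < u \<and> y = 1 \<and> P v u"
    then have "?w = long_root (v, u, x = 1)" using x by (auto simp: long_root_apply bsign_def fun_eq_iff)
    then show ?thesis using h by auto
  qed
qed

lemma signed_unit_mem:
  fixes P :: "nat \<Rightarrow> nat \<Rightarrow> bool"
  assumes x: "x = 1 \<or> x = -1"
  shows "(\<lambda>k. x * eps u k) \<in> long_root ` {(a, b, s). a < b \<and> P a b} \<union> short_set t T
     \<longleftrightarrow> x = 1 \<and> t = TypeB \<and> u \<in> T" (is "?w \<in> ?R \<longleftrightarrow> ?rhs")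
proof
  assume "?w \<in> ?R"
  then consider (long) a b s where "a < b" "?w = long_root (a, b, s)"
    | (short) c where "t = TypeB" "c \<in> T" "?w = eps c"
    unfolding short_set_def by (auto split: if_splits)
  then show ?rhs
  proof cases
    case long
    from fun_cong[OF long(2), of a] fun_cong[OF long(2), of b]
    show ?thesis using long(1) x unfolding long_root_apply bsign_def by (auto split: if_splits)
  next
    case short
    from fun_cong[OF short(3), of u] show ?thesis using short x by (auto split: if_splits)
  qed
next
  assume ?rhs
  then show "?w \<in> ?R" unfolding short_set_def by (auto simp: fun_eq_iff)
qed

lemma col_em: assumes "a < b" shows "col (em a b) = a"
proof -
  have "\<exists>i j. i < j \<and> (em a b = em i j \<or> em a b = ep i j)" using assms by blast
  moreover have "(SOME i. \<exists>j. i < j \<and> (em a b = em i j \<or> em a b = ep i j)) = a"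
    by (rule some_equality) (use assms in \<open>auto simp: em_eq_iff em_ne_ep\<close>)
  ultimately show ?thesis unfolding col_def em_lam ep_lam by simp
qed

lemma col_ep: assumes "a < b" shows "col (ep a b) = a"
proof -
  have "\<exists>i j. i < j \<and> (ep a b = em i j \<or> ep a b = ep i j)" using assms by blast
  moreover have "(SOME i. \<exists>j. i < j \<and> (ep a b = em i j \<or> ep a b = ep i j)) = a"
    by (rule some_equality) (use assms in \<open>auto simp: ep_eq_iff em_ne_ep\<close>)
  ultimately show ?thesis unfolding col_def em_lam ep_lam by simp
qed

lemma col_long_root: "a < b \<Longrightarrow> col (long_root (a, b, s)) = a"
  by (simp add: long_root_def col_em col_ep)

lemma col_eps: "col (eps a) = a"
proof -
  have c: "\<not> (\<exists>i j. i < j \<and> (eps a = em i j \<or> eps a = ep i j))"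
    by (auto simp: eps_ne_em eps_ne_ep)
  have "(SOME i. eps a = eps i \<or> eps a = (\<lambda>k. 2 * eps i k)) = a"
  proof (rule some_equality)
    fix i assume "eps a = eps i \<or> eps a = (\<lambda>k. 2 * eps i k)"
    then show "i = a"
    proof
      assume "eps a = (\<lambda>k. 2 * eps i k)"
      from fun_cong[OF this, of a] show "i = a" by (auto split: if_splits)
    qed simp
  qed simp
  then show ?thesis unfolding col_def em_lam ep_lam if_not_P[OF c] by simp
qed

lemma row_em: assumes "a < b" shows "row (em a b) = int b"
proof -
  have "\<exists>i j. i < j \<and> em a b = em i j" using assms by blast
  moreover have "(SOME j. \<exists>i. i < j \<and> em a b = em i j) = b"
    by (rule some_equality) (use assms in \<open>auto simp: em_eq_iff\<close>)
  ultimately show ?thesis unfolding row_def em_lam ep_lam by simp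
qed

lemma row_ep: assumes "a < b" shows "row (ep a b) = - int b"
proof -
  have c0: "\<not> (\<exists>i j. i < j \<and> ep a b = em i j)" using em_ne_ep by force
  have c: "\<exists>i j. i < j \<and> ep a b = ep i j" using assms by blast
  have "(SOME j. \<exists>i. i < j \<and> ep a b = ep i j) = b"
    by (rule some_equality) (use assms in \<open>auto simp: ep_eq_iff\<close>)
  then show ?thesis unfolding row_def em_lam ep_lam if_not_P[OF c0] if_P[OF c] by simp
qed

lemma row_long_root: "a < b \<Longrightarrow> row (long_root (a, b, s)) = (if s then - int b else int b)"
  by (simp add: long_root_def row_em row_ep)

lemma row_eps: "row (eps a) = 0"
proof -
  have c1: "\<not> (\<exists>i j. i < j \<and> eps a = em i j)" and c2: "\<not> (\<exists>i j. i < j \<and> eps a = ep i j)"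
    by (auto simp: eps_ne_em eps_ne_ep)
  then show ?thesis unfolding row_def em_lam ep_lam if_not_P[OF c1] if_not_P[OF c2] by simp
qed

definition col_idx :: "nat \<Rightarrow> nat \<Rightarrow> (nat \<times> nat \<times> bool) set" where
  "col_idx n x = {y \<in> long_idx n. fst y = x}"

lemma Cols_idx:
  assumes "t \<noteq> TypeC" "1 \<le> x" "x \<le> n"
  shows "Cols t n x = long_root ` col_idx n x \<union> short_set t {x}"
proof -
  have "Cols t n x = {\<alpha> \<in> long_root ` long_idx n. col \<alpha> = x} \<union> {\<alpha> \<in> short_set t {1..n}. col \<alpha> = x}"
    unfolding Cols_def pos_roots_idx[OF assms(1)] by auto
  also have "{\<alpha> \<in> long_root ` long_idx n. col \<alpha> = x} = long_root ` col_idx n x"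
    by (auto simp: col_idx_def long_idx_def col_long_root)
  also have "{\<alpha> \<in> short_set t {1..n}. col \<alpha> = x} = short_set t {x}"
  proof -
    have "{a \<in> {1..n}. col (eps a) = x} = {x}" using assms(2,3) by (auto simp: col_eps)
    then show ?thesis unfolding short_set_filter by simp
  qed
  finally show ?thesis .
qed

lemma card_Cols:
  assumes "t \<noteq> TypeC" "1 \<le> x" "x \<le> n"
  shows "card (Cols t n x) = card (col_idx n x) + card (short_set t {x})"
  using card_roots_filter[of "col_idx n x" n "{x}" t "\<lambda>_. True"]
  unfolding Cols_idx[OF assms] by (simp add: col_idx_def Un_def)

locale orth_roots =
  fixes t :: rtype and n :: nat and D :: "(nat \<Rightarrow> real) set"
  assumes not_C: "t \<noteq> TypeC"
    and D_roots: "D \<subseteq> pos_roots t n"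
    and orth: "orthogonal_set n D"
begin

lemma finite_D: "finite D"
proof -
  have "finite (pos_roots t n)"
    unfolding pos_roots_idx[OF not_C] short_set_def using finite_long_idx by auto
  then show ?thesis using D_roots finite_subset by blast
qed

lemma orth_D: "\<beta> \<in> D \<Longrightarrow> \<gamma> \<in> D \<Longrightarrow> \<beta> \<noteq> \<gamma> \<Longrightarrow> inner_n n \<beta> \<gamma> = 0"
  using orth unfolding orthogonal_set_def by auto

lemma root_cases:
  assumes "\<beta> \<in> pos_roots t n"
  obtains (long) a b s where "1 \<le> a" "a < b" "b \<le> n" "\<beta> = long_root (a, b, s)"
    | (short) a where "t = TypeB" "1 \<le> a" "a \<le> n" "\<beta> = eps a"
  using assms unfolding pos_roots_idx[OF not_C] long_idx_def short_set_def by (auto split: if_splits)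

lemma root_norm_nonzero: "\<beta> \<in> pos_roots t n \<Longrightarrow> inner_n n \<beta> \<beta> \<noteq> 0"
  by (cases rule: root_cases, assumption) (auto simp: long_root_def inner_roots)

lemma root_at:
  assumes "\<beta> \<in> pos_roots t n" "\<beta> m \<noteq> 0"
  obtains (long) a b s where "1 \<le> a" "a < b" "b \<le> n" "m = a \<or> m = b" "\<beta> = long_root (a, b, s)"
    | (short) "t = TypeB" "1 \<le> m" "m \<le> n" "\<beta> = eps m"
  using assms(1)
proof (cases rule: root_cases)
  case (long a b s)
  then have "m = a \<or> m = b" using assms(2) by (auto simp: long_root_def split: if_splits)
  then show thesis using long that(1) by blast
next
  case (short a)
  then show thesis using assms(2) that(2) by (auto split: if_splits)
qed

lemma orth_roots_sharing_index:
  assumes "\<beta> \<in> pos_roots t n" "\<gamma> \<in> pos_roots t n" "\<beta> \<noteq> \<gamma>" "\<beta> m \<noteq> 0" "\<gamma> m \<noteq> 0"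
    and "inner_n n \<beta> \<gamma> = 0"
  shows "\<exists>a b. 1 \<le> a \<and> a < b \<and> b \<le> n \<and> (m = a \<or> m = b) \<and> {\<beta>, \<gamma>} = {em a b, ep a b}"
  using assms(1,4)
proof (cases rule: root_at)
  case \<beta>: (long a b s)
  from assms(2,5) show ?thesis
  proof (cases rule: root_at)
    case \<gamma>: (long a' b' s')
    have "a' = a \<and> b' = b \<and> s' = (\<not> s)"
      using orth_long_roots_sharing_index[of a b n a' b' m s s'] \<beta> \<gamma> assms(6) by auto
    then show ?thesis using \<beta> \<gamma> by (cases s) (auto simp: long_root_def)
  next
    case \<gamma>: short
    then show ?thesis using \<beta> assms(6) by (cases s) (auto simp: long_root_def inner_roots)
  qed
next
  case \<beta>: short
  from assms(2,5) show ?thesis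
  proof (cases rule: root_at)
    case \<gamma>: (long a' b' s')
    then show ?thesis using \<beta> assms(6) by (cases s') (auto simp: long_root_def inner_roots)
  next
    case \<gamma>: short
    then show ?thesis using \<beta> assms(3) by simp
  qed
qed

definition D_at :: "nat \<Rightarrow> (nat \<Rightarrow> real) set" where
  "D_at m = {\<beta> \<in> D. \<beta> m \<noteq> 0}"

lemma D_at_cases:
  obtains (none) "D_at m = {}"
    | (single) \<beta> where "D_at m = {\<beta>}"
    | (pair) a b where "1 \<le> a" "a < b" "b \<le> n" "m = a \<or> m = b" "D_at m = {em a b, ep a b}"
proof -
  consider "D_at m = {}" | \<beta> where "D_at m = {\<beta>}"
    | \<beta> \<gamma> where "\<beta> \<in> D_at m" "\<gamma> \<in> D_at m" "\<gamma> \<noteq> \<beta>"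
    by blast
  then show thesis
  proof cases
    case 1
    then show thesis by (rule none)
  next
    case (2 \<beta>)
    then show thesis by (rule single)
  next
    case (3 \<beta> \<gamma>)
    have pair_with_\<beta>:
      "\<exists>a b. 1 \<le> a \<and> a < b \<and> b \<le> n \<and> (m = a \<or> m = b) \<and> {\<beta>, \<delta>} = {em a b, ep a b}"
      if "\<delta> \<in> D_at m" "\<delta> \<noteq> \<beta>" for \<delta>
    proof (rule orth_roots_sharing_index)
      show "\<beta> \<in> pos_roots t n" "\<delta> \<in> pos_roots t n" "\<beta> m \<noteq> 0" "\<delta> m \<noteq> 0"
        using that(1) 3(1) D_roots unfolding D_at_def by auto
      show "\<beta> \<noteq> \<delta>" "inner_n n \<beta> \<delta> = 0"
        using that 3(1) orth_D unfolding D_at_def by auto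
    qed
    obtain a b where ab: "1 \<le> a" "a < b" "b \<le> n" "m = a \<or> m = b" "{\<beta>, \<gamma>} = {em a b, ep a b}"
      using pair_with_\<beta>[OF 3(2,3)] by blast
    have "\<delta> \<in> {em a b, ep a b}" if \<delta>: "\<delta> \<in> D_at m" for \<delta>
    proof (cases "\<delta> = \<beta>")
      case True
      then show ?thesis unfolding ab(5)[symmetric] by simp
    next
      case False
      then obtain a' b' where ab': "a' < b'" "{\<beta>, \<delta>} = {em a' b', ep a' b'}"
        using pair_with_\<beta>[OF \<delta> False] by blast
      have "\<beta> \<in> {em a b, ep a b}" "\<beta> \<in> {em a' b', ep a' b'}"
        unfolding ab(5)[symmetric] ab'(2)[symmetric] by simp_all
      then have "a' = a \<and> b' = b" using ab(2) ab'(1) by (auto simp: em_eq_iff ep_eq_iff em_ne_ep)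
      then show ?thesis using ab'(2) by blast
    qed
    moreover have "{em a b, ep a b} \<subseteq> D_at m" unfolding ab(5)[symmetric] using 3 by blast
    ultimately show thesis using pair[OF ab(1-4)] by blast
  qed
qed

lemma refl_sum_eps:
  assumes "1 \<le> m" "m \<le> n"
  shows "refl_sum n D (eps m) = (\<lambda>k. eps m k - (\<Sum>\<beta>\<in>D_at m. 2 * \<beta> m / inner_n n \<beta> \<beta> * \<beta> k))"
proof -
  have "(\<Sum>\<beta>\<in>D_at m. 2 * \<beta> m / inner_n n \<beta> \<beta> * \<beta> k) = (\<Sum>\<beta>\<in>D. 2 * \<beta> m / inner_n n \<beta> \<beta> * \<beta> k)" for k
    unfolding D_at_def using finite_D by (subst sum.inter_filter) (auto intro: sum.cong)
  then show ?thesis unfolding refl_sum_def using assms by (simp add: inner_eps_left)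
qed

lemma refl_sum_eps_cases:
  assumes m: "1 \<le> m" "m \<le> n"
  obtains (untouched) "D_at m = {}" "refl_sum n D (eps m) = (\<lambda>k. 1 * eps m k)"
    | (short) "D_at m = {eps m}" "refl_sum n D (eps m) = (\<lambda>k. -1 * eps m k)"
    | (minus) a b where "1 \<le> a" "a < b" "b \<le> n" "m = a \<or> m = b" "D_at m = {em a b}"
        "refl_sum n D (eps m) = (\<lambda>k. 1 * eps (a + b - m) k)"
    | (plus) a b where "1 \<le> a" "a < b" "b \<le> n" "m = a \<or> m = b" "D_at m = {ep a b}"
        "refl_sum n D (eps m) = (\<lambda>k. -1 * eps (a + b - m) k)"
    | (pair) a b where "1 \<le> a" "a < b" "b \<le> n" "m = a \<or> m = b" "D_at m = {em a b, ep a b}"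
        "refl_sum n D (eps m) = (\<lambda>k. -1 * eps m k)"
proof (cases m rule: D_at_cases)
  case none
  then show thesis using untouched refl_sum_eps[OF m] by simp
next
  case (single \<beta>)
  then have \<beta>: "\<beta> \<in> pos_roots t n" "\<beta> m \<noteq> 0" using D_roots unfolding D_at_def by auto
  have image: "refl_sum n D (eps m) = (\<lambda>k. eps m k - 2 * \<beta> m / inner_n n \<beta> \<beta> * \<beta> k)"
    using refl_sum_eps[OF m] single by simp
  from \<beta> show thesis
  proof (cases rule: root_at)
    case (long a b s)
    have norm: "inner_n n \<beta> \<beta> = 2"
      unfolding long(5) using long(1-3) by (cases s) (simp_all add: long_root_def inner_roots)
    have image': "refl_sum n D (eps m) = (\<lambda>k. eps m k - \<beta> m * \<beta> k)"
      unfolding image norm by simp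
    have "refl_sum n D (eps m) = (\<lambda>k. - bsign s * eps (a + b - m) k)"
      using long(4)
    proof
      assume "m = a"
      then show ?thesis unfolding image' long(5) using long(2) by (cases s) (auto simp: long_root_def bsign_def)
    next
      assume "m = b"
      then show ?thesis unfolding image' long(5) using long(2) by (cases s) (auto simp: long_root_def bsign_def)
    qed
    then show thesis
      using plus[OF long(1-4)] minus[OF long(1-4)] single long(5)
      by (cases s) (simp_all add: long_root_def bsign_def)
  next
    case short
    have "refl_sum n D (eps m) = (\<lambda>k. -1 * eps m k)"
      unfolding image short(4) using short by (simp add: inner_roots fun_eq_iff)
    then show thesis using that(2) single short(4) by simp
  qed
next
  case (pair a b)
  have "em a b \<noteq> ep a b" using pair em_ne_ep by simp
  moreover have "inner_n n (em a b) (em a b) = 2" "inner_n n (ep a b) (ep a b) = 2"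
    using pair(1-3) by (simp_all add: inner_roots)
  ultimately have "refl_sum n D (eps m) = (\<lambda>k. -1 * eps m k)"
    using refl_sum_eps[OF m] pair(2,4,5) by (auto simp: fun_eq_iff)
  then show thesis by (rule that(5)[OF pair])
qed

lemma refl_sum_eps_signed:
  assumes m: "1 \<le> m" "m \<le> n"
  shows "\<exists>m' c. 1 \<le> m' \<and> m' \<le> n \<and> (c = 1 \<or> c = -1) \<and> refl_sum n D (eps m) = (\<lambda>k. c * eps m' k)"
using m proof (cases rule: refl_sum_eps_cases)
  case (minus a b)
  then show ?thesis by (intro exI[of _ "a + b - m"] exI[of _ 1]) auto
next
  case (plus a b)
  then show ?thesis by (intro exI[of _ "a + b - m"] exI[of _ "-1"]) auto
qed (use m in blast)+

definition perm_sign :: "nat \<Rightarrow> nat \<times> real" where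
  "perm_sign m = (SOME x. 1 \<le> fst x \<and> fst x \<le> n \<and> (snd x = 1 \<or> snd x = -1)
                        \<and> refl_sum n D (eps m) = (\<lambda>k. snd x * eps (fst x) k))"

definition perm :: "nat \<Rightarrow> nat" where
  "perm m = fst (perm_sign m)"

definition sign :: "nat \<Rightarrow> real" where
  "sign m = snd (perm_sign m)"

lemma signed_perm:
  assumes "1 \<le> m" "m \<le> n"
  shows "1 \<le> perm m \<and> perm m \<le> n \<and> (sign m = 1 \<or> sign m = -1)
       \<and> refl_sum n D (eps m) = (\<lambda>k. sign m * eps (perm m) k)"
proof -
  have "\<exists>x. 1 \<le> fst x \<and> fst x \<le> n \<and> (snd x = 1 \<or> snd x = -1)
          \<and> refl_sum n D (eps m) = (\<lambda>k. snd x * eps (fst x) k)"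
    using refl_sum_eps_signed[OF assms] by auto
  from someI_ex[OF this] show ?thesis unfolding perm_def sign_def perm_sign_def .
qed

lemma refl_sum_eps_perm: "1 \<le> m \<Longrightarrow> m \<le> n \<Longrightarrow> refl_sum n D (eps m) = (\<lambda>k. sign m * eps (perm m) k)"
  using signed_perm by blast

lemma perm_range: "1 \<le> m \<Longrightarrow> m \<le> n \<Longrightarrow> 1 \<le> perm m \<and> perm m \<le> n"
  using signed_perm by blast

lemma sign_cases: "1 \<le> m \<Longrightarrow> m \<le> n \<Longrightarrow> sign m = 1 \<or> sign m = -1"
  using signed_perm by blast

lemma perm_sign_eqI:
  assumes "1 \<le> m" "m \<le> n" "refl_sum n D (eps m) = (\<lambda>k. x * eps u k)" "x \<noteq> 0"
  shows "perm m = u \<and> sign m = x"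
  using scaled_eps_unique[of "sign m" "perm m" x u] signed_perm[OF assms(1,2)] assms(3,4) by force

(* sigma is an involution, so perm is an involution preserving signs. *)
lemma perm_invol:
  assumes m: "1 \<le> m" "m \<le> n"
  shows "perm (perm m) = m \<and> sign (perm m) = sign m"
proof -
  have pm: "1 \<le> perm m" "perm m \<le> n" using perm_range[OF m] by auto
  have "\<forall>b\<in>D. inner_n n b b \<noteq> 0" using root_norm_nonzero D_roots by blast
  then have "eps m = refl_sum n D (refl_sum n D (eps m))"
    using refl_sum_invol[OF finite_D orth] by simp
  also have "\<dots> = refl_sum n D (\<lambda>k. sign m * eps (perm m) k)"
    by (simp only: refl_sum_eps_perm[OF m])
  also have "\<dots> = (\<lambda>k. sign m * refl_sum n D (eps (perm m)) k)"
    by (rule refl_sum_scale)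
  also have "\<dots> = (\<lambda>k. (sign m * sign (perm m)) * eps (perm (perm m)) k)"
    by (simp only: refl_sum_eps_perm[OF pm] mult.assoc)
  finally have "(\<lambda>k. 1 * eps m k) = (\<lambda>k. (sign m * sign (perm m)) * eps (perm (perm m)) k)" by simp
  from scaled_eps_unique[OF this] have "m = perm (perm m)" "1 = sign m * sign (perm m)" by auto
  with sign_cases[OF m] sign_cases[OF pm] show ?thesis by auto
qed

lemma perm_inj: "1 \<le> a \<Longrightarrow> a \<le> n \<Longrightarrow> 1 \<le> b \<Longrightarrow> b \<le> n \<Longrightarrow> perm a = perm b \<Longrightarrow> a = b"
  by (metis perm_invol)

lemma ep_in_D_range:
  assumes "ep a b \<in> D" "a < b"
  shows "1 \<le> a \<and> b \<le> n"
proof -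
  have "ep a b \<in> pos_roots t n" using assms(1) D_roots by auto
  then show ?thesis
  proof (cases rule: root_cases)
    case (long a' b' s)
    then show ?thesis using assms(2) by (cases s) (auto simp: long_root_def ep_eq_iff em_ne_ep)
  qed (use assms(2) eps_ne_ep in auto)
qed

lemma eps_in_D_range:
  assumes "eps i \<in> D"
  shows "t = TypeB \<and> 1 \<le> i \<and> i \<le> n"
proof -
  have "eps i \<in> pos_roots t n" using assms D_roots by auto
  then show ?thesis
  proof (cases rule: root_cases)
    case (long a' b' s)
    then show ?thesis by (cases s) (auto simp: long_root_def eps_ne_em eps_ne_ep)
  qed auto
qed

lemma ep_in_D_share:
  assumes "ep a b \<in> D" "ep c d \<in> D" "a < b" "c < d" "a = c \<or> a = d \<or> b = c \<or> b = d"
  shows "a = c \<and> b = d"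
proof (cases "ep a b = ep c d")
  case True
  then show ?thesis using assms(3,4) by (auto simp: ep_eq_iff)
next
  case False
  then have "inner_n n (ep a b) (ep c d) = 0" using orth_D assms(1,2) by auto
  moreover have "1 \<le> a \<and> b \<le> n" "1 \<le> c \<and> d \<le> n" using ep_in_D_range assms by auto
  ultimately show ?thesis using assms(3-5) by (auto simp: inner_roots split: if_splits)
qed

lemma eps_ep_in_D_disjoint:
  assumes "eps i \<in> D" "ep c d \<in> D" "c < d" "i = c \<or> i = d"
  shows False
proof -
  have "inner_n n (eps i) (ep c d) = 0" using orth_D assms(1-3) eps_ne_ep by auto
  moreover have "1 \<le> i \<and> i \<le> n" using eps_in_D_range assms by auto
  ultimately show False using assms(3,4) by (auto simp: inner_roots split: if_splits)
qed

lemma pair_in_D_at: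
  assumes "1 \<le> a" "a < b" "b \<le> n" "em a b \<in> D" "ep a b \<in> D" "m = a \<or> m = b"
  shows "D_at m = {em a b, ep a b}"
proof (cases m rule: D_at_cases)
  case none
  then show ?thesis using assms unfolding D_at_def by auto
next
  case (single \<beta>)
  moreover have "em a b \<in> D_at m" "ep a b \<in> D_at m" using assms unfolding D_at_def by auto
  ultimately show ?thesis using em_ne_ep[of a b] assms(2) by auto
next
  case (pair a' b')
  moreover have "em a b \<in> D_at m" using assms unfolding D_at_def by auto
  ultimately have "a = a' \<and> b = b'" using assms(2) by (auto simp: em_eq_iff em_ne_ep)
  then show ?thesis using pair by simp
qed

lemma ep_in_D_perm:
  assumes "ep a b \<in> D" "a < b" "m = a \<or> m = b"
  shows "sign m = -1 \<and> perm m = (if em a b \<in> D then m else a + b - m)"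
proof -
  have ab: "1 \<le> a" "b \<le> n" using ep_in_D_range assms by auto
  then have m: "1 \<le> m" "m \<le> n" using assms by auto
  have in_at: "ep a b \<in> D_at m" using assms unfolding D_at_def by auto
  show ?thesis
  using m proof (cases rule: refl_sum_eps_cases)
    case (plus a' b')
    then have "a' = a \<and> b' = b" using in_at assms(2) by (auto simp: ep_eq_iff)
    moreover have "em a b \<notin> D"
    proof
      assume "em a b \<in> D"
      then have "em a b \<in> D_at m" using assms(2,3) unfolding D_at_def by auto
      then show False using plus(5) calculation em_ne_ep[of a b] assms(2) by auto
    qed
    ultimately show ?thesis using perm_sign_eqI[OF m plus(6)] by simp
  next
    case (pair a' b')
    then have "a' = a \<and> b' = b" using in_at assms(2) by (auto simp: ep_eq_iff em_ne_ep)
    then show ?thesis using pair perm_sign_eqI[OF m pair(6)] unfolding D_at_def by auto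
  qed (use in_at assms(2) in \<open>auto simp: eps_ne_ep em_ne_ep\<close>)
qed

lemma eps_in_D_perm:
  assumes "eps i \<in> D"
  shows "sign i = -1 \<and> perm i = i"
proof -
  have m: "1 \<le> i" "i \<le> n" using eps_in_D_range assms by auto
  have in_at: "eps i \<in> D_at i" using assms unfolding D_at_def by auto
  show ?thesis
  using m proof (cases rule: refl_sum_eps_cases)
    case short
    then show ?thesis using perm_sign_eqI[OF m short(2)] by simp
  qed (use in_at in \<open>auto simp: eps_ne_ep eps_ne_em\<close>)
qed

lemma sign_neg_cover:
  assumes m: "1 \<le> m" "m \<le> n" and neg: "sign m = -1"
  shows "eps m \<in> D \<or> (\<exists>a b. a < b \<and> (m = a \<or> m = b) \<and> ep a b \<in> D)"
using m proof (cases rule: refl_sum_eps_cases)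
  case untouched
  then show ?thesis using perm_sign_eqI[OF m untouched(2)] neg by simp
next
  case short
  then show ?thesis unfolding D_at_def by auto
next
  case (minus a b)
  then show ?thesis using perm_sign_eqI[OF m minus(6)] neg by simp
next
  case (plus a b)
  then show ?thesis unfolding D_at_def by blast
next
  case (pair a b)
  then show ?thesis unfolding D_at_def by blast
qed

(* Inversions of sigma.  sigma(e_a +- e_b) = sign a e_(perm a) +- sign b e_(perm b) is a
   negative root iff the coefficient of the smaller of perm a, perm b is -1. *)
definition inv_cond :: "nat \<times> nat \<times> bool \<Rightarrow> bool" where
  "inv_cond x = (case x of (a, b, s) \<Rightarrow>
     (perm a < perm b \<and> sign a = -1) \<or> (perm b < perm a \<and> bsign s * sign b = -1))"

lemma refl_sum_long_root:
  assumes "1 \<le> a" "a < b" "b \<le> n"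
  shows "refl_sum n D (long_root (a, b, s))
       = (\<lambda>k. sign a * eps (perm a) k + (bsign s * sign b) * eps (perm b) k)"
proof -
  have a: "refl_sum n D (eps a) = (\<lambda>k. sign a * eps (perm a) k)"
    and b: "refl_sum n D (eps b) = (\<lambda>k. sign b * eps (perm b) k)"
    using refl_sum_eps_perm assms by auto
  show ?thesis by (cases s) (simp_all add: long_root_def refl_sum_em refl_sum_ep a b bsign_def fun_eq_iff)
qed

(* The positive roots in the shape expected by signed_pair_mem. *)
lemma long_idx_pred: "long_idx n = {(a, b, s). a < b \<and> (1 \<le> a \<and> b \<le> n)}"
  unfolding long_idx_def by auto

lemma pos_roots_pred: "pos_roots t n = long_root ` {(a, b, s). a < b \<and> (1 \<le> a \<and> b \<le> n)} \<union> short_set t {1..n}"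
  using pos_roots_idx[OF not_C] long_idx_pred by simp

lemma long_root_inversion:
  assumes "(a, b, s) \<in> long_idx n"
  shows "(\<lambda>k. - refl_sum n D (long_root (a, b, s)) k) \<in> pos_roots t n \<longleftrightarrow> inv_cond (a, b, s)"
proof -
  have ab: "1 \<le> a" "a < b" "b \<le> n" using assms unfolding long_idx_def by auto
  have neg: "(\<lambda>k. - refl_sum n D (long_root (a, b, s)) k)
      = (\<lambda>k. (- sign a) * eps (perm a) k + (- (bsign s * sign b)) * eps (perm b) k)"
    unfolding refl_sum_long_root[OF ab] by (simp add: fun_eq_iff)
  have ne: "perm a \<noteq> perm b" using perm_inj[of a b] ab by auto
  have range: "1 \<le> perm a" "perm a \<le> n" "1 \<le> perm b" "perm b \<le> n"
    using perm_range[of a] perm_range[of b] ab by auto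
  have signs: "- sign a = 1 \<or> - sign a = -1" "- (bsign s * sign b) = 1 \<or> - (bsign s * sign b) = -1"
    using sign_cases[of a] sign_cases[of b] ab bsign_cases[of s] by auto
  show ?thesis
    unfolding neg pos_roots_pred signed_pair_mem[OF ne signs] inv_cond_def
    using range ne by auto
qed

lemma short_root_inversion:
  assumes "1 \<le> a" "a \<le> n" "t = TypeB"
  shows "(\<lambda>k. - refl_sum n D (eps a) k) \<in> pos_roots t n \<longleftrightarrow> sign a = -1"
proof -
  have neg: "(\<lambda>k. - refl_sum n D (eps a) k) = (\<lambda>k. (- sign a) * eps (perm a) k)"
    using refl_sum_eps_perm assms by (simp add: fun_eq_iff)
  have sign: "- sign a = 1 \<or> - sign a = -1" using sign_cases assms by auto
  show ?thesis
    unfolding neg pos_roots_pred signed_unit_mem[OF sign] using perm_range assms sign by auto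
qed

lemma weyl_length_refl_sum:
  "weyl_length t n (refl_sum n D)
     = card {x \<in> long_idx n. inv_cond x} + card (short_set t {a \<in> {1..n}. sign a = -1})"
proof -
  have "weyl_length t n (refl_sum n D)
      = card {x \<in> long_idx n. (\<lambda>k. - refl_sum n D (long_root x) k) \<in> pos_roots t n}
        + card (short_set t {a \<in> {1..n}. (\<lambda>k. - refl_sum n D (eps a) k) \<in> pos_roots t n})"
    unfolding weyl_length_def pos_roots_idx[OF not_C, of n, symmetric]
    using card_roots_filter[of "long_idx n" n "{1..n}" t "\<lambda>\<alpha>. (\<lambda>k. - refl_sum n D \<alpha> k) \<in> pos_roots t n"]
    by (simp add: pos_roots_idx[OF not_C])
  also have "{x \<in> long_idx n. (\<lambda>k. - refl_sum n D (long_root x) k) \<in> pos_roots t n}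
           = {x \<in> long_idx n. inv_cond x}"
    using long_root_inversion by auto
  also have "short_set t {a \<in> {1..n}. (\<lambda>k. - refl_sum n D (eps a) k) \<in> pos_roots t n}
           = short_set t {a \<in> {1..n}. sign a = -1}"
    using short_root_inversion unfolding short_set_def by auto
  finally show ?thesis .
qed

end

locale orth_roots_pair = orth_roots +
  fixes j :: nat
  assumes j_gt_1: "1 < j" and j_le_n: "j \<le> n"
    and em_1j: "em 1 j \<in> D" and ep_1j: "ep 1 j \<in> D"
begin

lemma perm_1: "perm 1 = 1" "sign 1 = -1"
  using ep_in_D_perm[OF ep_1j j_gt_1] em_1j by auto

lemma perm_j: "perm j = j" "sign j = -1"
  using ep_in_D_perm[OF ep_1j j_gt_1] em_1j by auto

definition K :: "nat set" where
  "K = {m. 1 \<le> m \<and> m \<le> n \<and> m \<noteq> 1 \<and> m \<noteq> j}"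

lemma finite_K: "finite K"
  unfolding K_def by auto

lemma perm_K: assumes "m \<in> K" shows "perm m \<in> K"
proof -
  have m: "1 \<le> m" "m \<le> n" "m \<noteq> 1" "m \<noteq> j" using assms unfolding K_def by auto
  have "perm m \<noteq> 1" using perm_invol[OF m(1,2)] perm_1 m(3) by metis
  moreover have "perm m \<noteq> j" using perm_invol[OF m(1,2)] perm_j m(4) by metis
  ultimately show ?thesis using perm_range[OF m(1,2)] unfolding K_def by auto
qed

definition red_roots :: "(nat \<Rightarrow> real) set" where
  "red_roots = pos_roots t n - (Cols t n 1 \<union> Cols t n j \<union> Rows t n (int j) \<union> Rows t n (- int j))"

definition red_idx :: "(nat \<times> nat \<times> bool) set" where
  "red_idx = {(a, b, s). a < b \<and> (1 \<le> a \<and> b \<le> n \<and> a \<noteq> 1 \<and> a \<noteq> j \<and> b \<noteq> j)}"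

lemma red_idx_sub: "red_idx \<subseteq> long_idx n"
  unfolding red_idx_def long_idx_def by auto

lemma long_root_in_red:
  assumes "(a, b, s) \<in> long_idx n"
  shows "long_root (a, b, s) \<in> red_roots \<longleftrightarrow> a \<noteq> 1 \<and> a \<noteq> j \<and> b \<noteq> j"
proof -
  have ab: "1 \<le> a" "a < b" "b \<le> n" using assms unfolding long_idx_def by auto
  have "long_root (a, b, s) \<in> pos_roots t n" using assms unfolding pos_roots_idx[OF not_C] by auto
  then show ?thesis using ab j_gt_1 unfolding red_roots_def Cols_def Rows_def
    by (auto simp: col_long_root row_long_root)
qed

lemma eps_in_red:
  assumes "1 \<le> a" "a \<le> n" "t = TypeB"
  shows "eps a \<in> red_roots \<longleftrightarrow> a \<in> K"
proof -
  have "eps a \<in> pos_roots t n" using assms unfolding pos_roots_idx[OF not_C] short_set_def by auto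
  then show ?thesis using assms j_gt_1 unfolding red_roots_def Cols_def Rows_def K_def
    by (auto simp: col_eps row_eps)
qed

lemma red_roots_idx: "red_roots = long_root ` red_idx \<union> short_set t K"
proof
  show "red_roots \<subseteq> long_root ` red_idx \<union> short_set t K"
  proof
    fix \<alpha> assume \<alpha>: "\<alpha> \<in> red_roots"
    then have "\<alpha> \<in> pos_roots t n" unfolding red_roots_def by auto
    then show "\<alpha> \<in> long_root ` red_idx \<union> short_set t K"
    proof (cases rule: root_cases)
      case (long a b s)
      then have "(a, b, s) \<in> long_idx n" unfolding long_idx_def by auto
      then have "a \<noteq> 1 \<and> a \<noteq> j \<and> b \<noteq> j" using long_root_in_red \<alpha> long by auto
      then show ?thesis using long unfolding red_idx_def by auto
    next
      case (short a)
      then show ?thesis using eps_in_red[of a] \<alpha> unfolding short_set_def by auto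
    qed
  qed
next
  show "long_root ` red_idx \<union> short_set t K \<subseteq> red_roots"
  proof
    fix \<alpha> assume "\<alpha> \<in> long_root ` red_idx \<union> short_set t K"
    then consider x where "x \<in> red_idx" "\<alpha> = long_root x" | a where "t = TypeB" "a \<in> K" "\<alpha> = eps a"
      unfolding short_set_def by (auto split: if_splits)
    then show "\<alpha> \<in> red_roots"
    proof cases
      case 1
      then obtain a b s where "x = (a, b, s)" "(a, b, s) \<in> long_idx n" "a \<noteq> 1 \<and> a \<noteq> j \<and> b \<noteq> j"
        unfolding red_idx_def long_idx_def by auto
      then show ?thesis using long_root_in_red 1 by auto
    next
      case 2
      then show ?thesis using eps_in_red[of a] unfolding K_def by auto
    qed
  qed
qed

lemma D_outside_red:
  assumes "\<beta> \<in> D" "\<beta> \<notin> red_roots"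
  shows "\<beta> = em 1 j \<or> \<beta> = ep 1 j"
proof -
  have "\<beta> \<in> pos_roots t n" using assms D_roots by auto
  then have "\<beta> 1 \<noteq> 0 \<or> \<beta> j \<noteq> 0"
  proof (cases rule: root_cases)
    case (long a b s)
    then have "(a, b, s) \<in> long_idx n" unfolding long_idx_def by auto
    then have "a = 1 \<or> a = j \<or> b = j" using long_root_in_red assms long by auto
    then show ?thesis using long by (cases s) (auto simp: long_root_def)
  next
    case (short a)
    then have "a = 1 \<or> a = j" using eps_in_red[of a] assms unfolding K_def by auto
    then show ?thesis using short by auto
  qed
  then have "\<beta> \<in> D_at 1 \<or> \<beta> \<in> D_at j" using assms unfolding D_at_def by auto
  moreover have "D_at 1 = {em 1 j, ep 1 j}" "D_at j = {em 1 j, ep 1 j}"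
    using pair_in_D_at[OF _ j_gt_1 j_le_n em_1j ep_1j] by auto
  ultimately show ?thesis by auto
qed

definition red_D :: "(nat \<Rightarrow> real) set" where
  "red_D = D \<inter> red_roots"

lemma finite_red_D: "finite red_D"
  unfolding red_D_def using finite_D by auto

lemma orth_red_D: "orthogonal_set n red_D"
  using orth unfolding red_D_def orthogonal_set_def by auto

(* On the remaining indices the reduced element agrees with sigma, since the dropped
   roots e_1 -+ e_j are orthogonal to e_m. *)
lemma refl_sum_red_eps:
  assumes "m \<in> K"
  shows "refl_sum n red_D (eps m) = refl_sum n D (eps m)"
proof -
  have m: "1 \<le> m" "m \<le> n" "m \<noteq> 1" "m \<noteq> j" using assms unfolding K_def by auto
  have "(\<Sum>b\<in>red_D. 2 * inner_n n (eps m) b / inner_n n b b * b k)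
      = (\<Sum>b\<in>D. 2 * inner_n n (eps m) b / inner_n n b b * b k)" for k
  proof (rule sum.mono_neutral_left[OF finite_D])
    show "red_D \<subseteq> D" unfolding red_D_def by auto
    show "\<forall>b\<in>D - red_D. 2 * inner_n n (eps m) b / inner_n n b b * b k = 0"
    proof
      fix b assume "b \<in> D - red_D"
      then have "b = em 1 j \<or> b = ep 1 j" using D_outside_red unfolding red_D_def by auto
      then have "inner_n n (eps m) b = 0" using m by (auto simp: inner_roots)
      then show "2 * inner_n n (eps m) b / inner_n n b b * b k = 0" by simp
    qed
  qed
  then show ?thesis unfolding refl_sum_def by simp
qed

lemma refl_sum_red_long_root:
  assumes "(a, b, s) \<in> red_idx"
  shows "refl_sum n red_D (long_root (a, b, s)) = refl_sum n D (long_root (a, b, s))"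
proof -
  have "a \<in> K" "b \<in> K" using assms unfolding red_idx_def K_def by auto
  then show ?thesis by (cases s) (simp_all add: long_root_def refl_sum_em refl_sum_ep refl_sum_red_eps)
qed

lemma red_long_root_inversion:
  assumes x: "(a, b, s) \<in> red_idx"
  shows "refl_sum n red_D (long_root (a, b, s)) \<notin> red_roots \<longleftrightarrow> inv_cond (a, b, s)"
proof -
  have ab: "1 \<le> a" "a < b" "b \<le> n" and K: "a \<in> K" "b \<in> K" using x unfolding red_idx_def K_def by auto
  have image: "refl_sum n red_D (long_root (a, b, s))
      = (\<lambda>k. sign a * eps (perm a) k + (bsign s * sign b) * eps (perm b) k)"
    unfolding refl_sum_red_long_root[OF x] refl_sum_long_root[OF ab] ..
  have ne: "perm a \<noteq> perm b" using perm_inj[of a b] ab by auto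
  have range: "perm a \<in> K" "perm b \<in> K" using perm_K K by auto
  have signs: "sign a = 1 \<or> sign a = -1" "bsign s * sign b = 1 \<or> bsign s * sign b = -1"
    using sign_cases[of a] sign_cases[of b] ab bsign_cases[of s] by auto
  show ?thesis
    unfolding image red_roots_idx red_idx_def signed_pair_mem[OF ne signs] inv_cond_def
    using range ne signs unfolding K_def by auto
qed

lemma red_short_root_inversion:
  assumes "a \<in> K" "t = TypeB"
  shows "refl_sum n red_D (eps a) \<notin> red_roots \<longleftrightarrow> sign a = -1"
proof -
  have a: "1 \<le> a" "a \<le> n" using assms unfolding K_def by auto
  have image: "refl_sum n red_D (eps a) = (\<lambda>k. sign a * eps (perm a) k)"
    using refl_sum_eps_perm[OF a] refl_sum_red_eps[OF assms(1)] by simp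
  show ?thesis
    unfolding image red_roots_idx red_idx_def signed_unit_mem[OF sign_cases[OF a]]
    using perm_K assms sign_cases[OF a] by auto
qed

lemma reduced_length:
  "card {\<alpha> \<in> red_roots. refl_sum n red_D \<alpha> \<notin> red_roots}
     = card {x \<in> red_idx. inv_cond x} + card (short_set t {a \<in> K. sign a = -1})"
proof -
  have "card {\<alpha> \<in> red_roots. refl_sum n red_D \<alpha> \<notin> red_roots}
      = card {x \<in> red_idx. refl_sum n red_D (long_root x) \<notin> red_roots}
        + card (short_set t {a \<in> K. refl_sum n red_D (eps a) \<notin> red_roots})"
    unfolding red_roots_idx[symmetric]
    using card_roots_filter[OF red_idx_sub finite_K, of t "\<lambda>\<alpha>. refl_sum n red_D \<alpha> \<notin> red_roots"]
    by (simp add: red_roots_idx)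
  also have "{x \<in> red_idx. refl_sum n red_D (long_root x) \<notin> red_roots} = {x \<in> red_idx. inv_cond x}"
    using red_long_root_inversion by auto
  also have "short_set t {a \<in> K. refl_sum n red_D (eps a) \<notin> red_roots} = short_set t {a \<in> K. sign a = -1}"
    using red_short_root_inversion unfolding short_set_def by auto
  finally show ?thesis .
qed


lemma inv_cond_col_1: assumes "(1, b, s) \<in> long_idx n" shows "inv_cond (1, b, s)"
proof -
  have b: "1 < b" "b \<le> n" using assms unfolding long_idx_def by auto
  have "perm b \<noteq> 1" using perm_inj[of b 1] perm_1 b by auto
  moreover have "1 \<le> perm b" using perm_range[of b] b by auto
  ultimately show ?thesis unfolding inv_cond_def using perm_1 by auto
qed

definition row_j_idx :: "(nat \<times> nat \<times> bool) set" where
  "row_j_idx = {y \<in> long_idx n. fst y \<noteq> 1 \<and> fst (snd y) = j}"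

lemma card_inversions_split:
  "card {x \<in> long_idx n. inv_cond x}
     = card {x \<in> red_idx. inv_cond x} + card (col_idx n 1)
       + card {x \<in> col_idx n j. inv_cond x} + card {x \<in> row_j_idx. inv_cond x}"
proof -
  let ?R = "{x \<in> red_idx. inv_cond x}" and ?C1 = "col_idx n 1"
    and ?Cj = "{x \<in> col_idx n j. inv_cond x}" and ?Rj = "{x \<in> row_j_idx. inv_cond x}"
  have split: "{x \<in> long_idx n. inv_cond x} = ?R \<union> ?C1 \<union> ?Cj \<union> ?Rj"
    using red_idx_sub inv_cond_col_1
    unfolding col_idx_def row_j_idx_def red_idx_def long_idx_def by auto
  have "finite red_idx" using finite_subset[OF red_idx_sub finite_long_idx] .
  then have fin: "finite ?R" "finite ?C1" "finite ?Cj" "finite ?Rj"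
    unfolding col_idx_def row_j_idx_def by (simp_all add: finite_long_idx_filter)
  have disj: "?R \<inter> ?C1 = {}" "(?R \<union> ?C1) \<inter> ?Cj = {}" "(?R \<union> ?C1 \<union> ?Cj) \<inter> ?Rj = {}"
    using j_gt_1 unfolding col_idx_def row_j_idx_def red_idx_def long_idx_def by auto
  show ?thesis unfolding split using fin disj by (simp add: card_Un_disjoint)
qed

(* Column j: a root (j, b, s) fails to be an inversion iff perm b < j and s is the sign
   of b; so there is one non-inversion for each b > j with perm b < j. *)
definition jumps_down :: "nat set" where
  "jumps_down = {b. j < b \<and> b \<le> n \<and> perm b < j}"

lemma card_col_j_inversions:
  "card {x \<in> col_idx n j. inv_cond x} + card jumps_down = card (col_idx n j)"
proof -
  define inv where "inv = {x \<in> col_idx n j. inv_cond x}"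
  define non_inv where "non_inv = (\<lambda>b. (j, b, sign b = 1)) ` jumps_down"
  have split: "col_idx n j = inv \<union> non_inv"
  proof
    show "col_idx n j \<subseteq> inv \<union> non_inv"
    proof
      fix y assume y: "y \<in> col_idx n j"
      then obtain b s where yy: "y = (j, b, s)" "j < b" "b \<le> n" unfolding col_idx_def long_idx_def by auto
      have "perm b \<noteq> j" using perm_inj[of b j] perm_j yy j_gt_1 j_le_n by auto
      moreover have "sign b = 1 \<or> sign b = -1" using sign_cases[of b] yy j_gt_1 by auto
      ultimately have "\<not> inv_cond y \<Longrightarrow> perm b < j \<and> s = (sign b = 1)"
        using yy perm_j unfolding inv_cond_def bsign_def by (auto split: if_splits)
      then show "y \<in> inv \<union> non_inv"
        using y yy unfolding inv_def non_inv_def jumps_down_def by auto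
    qed
    show "inv \<union> non_inv \<subseteq> col_idx n j"
      unfolding inv_def non_inv_def col_idx_def jumps_down_def long_idx_def using j_gt_1 by auto
  qed
  have disj: "inv \<inter> non_inv = {}"
  proof -
    have "\<not> inv_cond (j, b, sign b = 1)" if "b \<in> jumps_down" for b
      using that sign_cases[of b] perm_j j_gt_1 unfolding jumps_down_def inv_cond_def bsign_def by auto
    then show ?thesis unfolding inv_def non_inv_def by auto
  qed
  have "finite (col_idx n j)"
    unfolding col_idx_def by (rule finite_long_idx_filter)
  then have "card (col_idx n j) = card inv + card non_inv"
    unfolding split using disj by (simp add: card_Un_disjoint)
  moreover have "card non_inv = card jumps_down"
    unfolding non_inv_def by (rule card_image) (auto simp: inj_on_def)
  ultimately show ?thesis unfolding inv_def by simp
qed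

(* Row j: a root (i, j, s) with 1 < i < j is an inversion iff j < perm i and s = True,
   or perm i < j and sign i = -1 (for both signs s). *)
definition jumps_up :: "nat set" where
  "jumps_up = {i. 1 < i \<and> i < j \<and> j < perm i}"

definition neg_low :: "nat set" where
  "neg_low = {i. 1 < i \<and> i < j \<and> perm i < j \<and> sign i = -1}"

lemma finite_below_j: "X \<subseteq> {i. i < j} \<Longrightarrow> finite X"
  using finite_subset by (metis finite_Collect_less_nat)

lemma card_row_j_inversions:
  "card {x \<in> row_j_idx. inv_cond x} = card jumps_up + 2 * card neg_low"
proof -
  have "{x \<in> row_j_idx. inv_cond x}
      = (\<lambda>i. (i, j, True)) ` jumps_up \<union> (\<lambda>(i, s). (i, j, s)) ` (neg_low \<times> UNIV)"
  proof
    show "{x \<in> row_j_idx. inv_cond x}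
      \<subseteq> (\<lambda>i. (i, j, True)) ` jumps_up \<union> (\<lambda>(i, s). (i, j, s)) ` (neg_low \<times> UNIV)"
    proof
      fix y assume y: "y \<in> {x \<in> row_j_idx. inv_cond x}"
      then obtain i s where yy: "y = (i, j, s)" "1 < i" "i < j" "inv_cond (i, j, s)"
        unfolding row_j_idx_def long_idx_def by auto
      have "perm i \<noteq> j" using perm_inj[of i j] perm_j yy j_le_n by auto
      then consider "perm i < j" "sign i = -1" | "j < perm i" "s"
        using yy perm_j unfolding inv_cond_def bsign_def by (auto split: if_splits)
      then show "y \<in> (\<lambda>i. (i, j, True)) ` jumps_up \<union> (\<lambda>(i, s). (i, j, s)) ` (neg_low \<times> UNIV)"
        by cases (use yy in \<open>auto simp: jumps_up_def neg_low_def\<close>)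
    qed
    show "(\<lambda>i. (i, j, True)) ` jumps_up \<union> (\<lambda>(i, s). (i, j, s)) ` (neg_low \<times> UNIV)
      \<subseteq> {x \<in> row_j_idx. inv_cond x}"
      using perm_j j_le_n
      unfolding jumps_up_def neg_low_def row_j_idx_def long_idx_def inv_cond_def bsign_def by auto
  qed
  moreover have "finite jumps_up" "finite neg_low"
    by (auto intro: finite_below_j simp: jumps_up_def neg_low_def)
  moreover have "card ((\<lambda>i. (i, j, True)) ` jumps_up) = card jumps_up"
    by (rule card_image) (auto simp: inj_on_def)
  moreover have "card ((\<lambda>(i, s). (i, j, s)) ` (neg_low \<times> (UNIV :: bool set))) = 2 * card neg_low"
    by (subst card_image) (auto simp: inj_on_def card_cartesian_product)
  moreover have "(\<lambda>i. (i, j, True)) ` jumps_up \<inter> (\<lambda>(i, s). (i, j, s)) ` (neg_low \<times> UNIV) = {}"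
    unfolding jumps_up_def neg_low_def by auto
  ultimately show ?thesis by (simp add: card_Un_disjoint)
qed

(* perm maps the indices above j sent below j onto the indices below j sent above j. *)
lemma card_jumps: "card jumps_down = card jumps_up"
proof -
  have "perm ` jumps_down = jumps_up"
  proof
    show "perm ` jumps_down \<subseteq> jumps_up"
    proof
      fix x assume "x \<in> perm ` jumps_down"
      then obtain b where b: "b \<in> jumps_down" "x = perm b" by auto
      then have "b \<in> K" using j_gt_1 unfolding jumps_down_def K_def by auto
      then show "x \<in> jumps_up"
        using b perm_K[of b] perm_invol[of b] unfolding jumps_down_def jumps_up_def K_def by auto
    qed
    show "jumps_up \<subseteq> perm ` jumps_down"
    proof
      fix i assume i: "i \<in> jumps_up"
      then have "i \<in> K" using j_le_n unfolding jumps_up_def K_def by auto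
      then have "perm i \<in> jumps_down" "perm (perm i) = i"
        using i perm_K[of i] perm_invol[of i] unfolding jumps_down_def jumps_up_def K_def by auto
      then show "i \<in> perm ` jumps_down" by (metis image_eqI)
    qed
  qed
  moreover have "inj_on perm jumps_down"
    by (rule inj_onI) (use perm_inj j_gt_1 in \<open>auto simp: jumps_down_def\<close>)
  ultimately show ?thesis using card_image by metis
qed

lemma card_long_inversions:
  "card {x \<in> long_idx n. inv_cond x}
     = card {x \<in> red_idx. inv_cond x} + card (col_idx n 1) + card (col_idx n j) + 2 * card neg_low"
  using card_inversions_split card_col_j_inversions card_row_j_inversions card_jumps by simp

(* Short roots: the signs of 1 and j are negative. *)
lemma card_short_inversions:
  "card (short_set t {a \<in> {1..n}. sign a = -1})
     = card (short_set t {a \<in> K. sign a = -1}) + card (short_set t {1}) + card (short_set t {j})"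
proof (cases "t = TypeB")
  case True
  have "{a \<in> {1..n}. sign a = -1} = insert 1 (insert j {a \<in> K. sign a = -1})"
    using perm_1 perm_j j_gt_1 j_le_n unfolding K_def by auto
  moreover have "1 \<notin> insert j {a \<in> K. sign a = -1}" "j \<notin> {a \<in> K. sign a = -1}"
    using j_gt_1 unfolding K_def by auto
  ultimately show ?thesis using True finite_K by (simp add: card_short_set)
qed (simp add: short_set_def)


(* The indices i with 1 < i < j, perm i < j and sign i = -1 are those covered by a short
   root e_i, by a root e_i + e_s or e_l + e_i with 1 < l, s < j, or by a pair
   e_i -+ e_s with s > j.  (A root e_i + e_s with s > j alone sends i above j, and a
   root e_1 + e_i or e_i + e_j cannot lie next to e_1 + e_j in D.) *)
definition low_covered :: "nat \<Rightarrow> bool" where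
  "low_covered i \<longleftrightarrow> eps i \<in> D \<or> (\<exists>s. i < s \<and> s < j \<and> ep i s \<in> D)
     \<or> (\<exists>l. 1 < l \<and> l < i \<and> ep l i \<in> D) \<or> (\<exists>s. j < s \<and> em i s \<in> D \<and> ep i s \<in> D)"

lemma neg_low_covered:
  assumes "i \<in> neg_low"
  shows "low_covered i"
proof -
  have i: "1 < i" "i < j" "perm i < j" "sign i = -1" using assms unfolding neg_low_def by auto
  have m: "1 \<le> i" "i \<le> n" using i j_le_n by auto
  from sign_neg_cover[OF m i(4)]
  consider (short) "eps i \<in> D" | (plus) a b where "a < b" "i = a \<or> i = b" "ep a b \<in> D"
    by blast
  then show ?thesis
  proof cases
    case short
    then show ?thesis unfolding low_covered_def by simp
  next
    case ab: (plus a b)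
    have "a \<noteq> 1 \<and> b \<noteq> j"
    proof (rule ccontr)
      assume "\<not> (a \<noteq> 1 \<and> b \<noteq> j)"
      then have "a = 1 \<and> b = j" using ep_in_D_share[OF ab(3) ep_1j ab(1) j_gt_1] by blast
      then show False using ab(2) i(1,2) by auto
    qed
    moreover have "1 \<le> a" using ep_in_D_range[OF ab(3,1)] by simp
    ultimately have a: "1 < a" and b: "b \<noteq> j" by auto
    from ab(2) show ?thesis
    proof
      assume "i = b"
      then show ?thesis using ab a unfolding low_covered_def by auto
    next
      assume "i = a"
      show ?thesis
      proof (cases "em a b \<in> D")
        case True
        then show ?thesis using b ab \<open>i = a\<close> unfolding low_covered_def by (cases "b < j") auto
      next
        case False
        then have "perm i = b" using ep_in_D_perm[OF ab(3,1)] \<open>i = a\<close> by simp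
        then show ?thesis using ab i \<open>i = a\<close> unfolding low_covered_def by auto
      qed
    qed
  qed
qed

lemma covered_neg_low:
  assumes i: "1 < i" "i < j" and cover: "low_covered i"
  shows "i \<in> neg_low"
proof -
  have "perm i < j \<and> sign i = -1"
    using cover unfolding low_covered_def
  proof (elim disjE exE conjE)
    assume "eps i \<in> D"
    then show ?thesis using eps_in_D_perm i by auto
  next
    fix s assume "i < s" "s < j" "ep i s \<in> D"
    then show ?thesis using ep_in_D_perm[of i s i] by auto
  next
    fix l assume "1 < l" "l < i" "ep l i \<in> D"
    then show ?thesis using ep_in_D_perm[of l i i] i by auto
  next
    fix s assume "j < s" "em i s \<in> D" "ep i s \<in> D"
    then show ?thesis using ep_in_D_perm[of i s i] i by auto
  qed
  then show ?thesis using i unfolding neg_low_def by auto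
qed

definition short_low :: "nat set" where
  "short_low = {l. 1 < l \<and> l < j \<and> eps l \<in> D}"

definition plus_low :: "(nat \<times> nat) set" where
  "plus_low = {(l, s). 1 < l \<and> l < s \<and> s < j \<and> ep l s \<in> D}"

definition pair_across :: "(nat \<times> nat) set" where
  "pair_across = {(l, s). 1 < l \<and> l < j \<and> j < s \<and> em l s \<in> D \<and> ep l s \<in> D}"

lemma neg_low_decomp: "neg_low = short_low \<union> fst ` plus_low \<union> snd ` plus_low \<union> fst ` pair_across"
proof
  show "neg_low \<subseteq> short_low \<union> fst ` plus_low \<union> snd ` plus_low \<union> fst ` pair_across"
  proof
    fix i assume i: "i \<in> neg_low"
    then have range: "1 < i" "i < j" unfolding neg_low_def by auto
    from neg_low_covered[OF i]
    show "i \<in> short_low \<union> fst ` plus_low \<union> snd ` plus_low \<union> fst ` pair_across"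
      unfolding low_covered_def
    proof (elim disjE exE conjE)
      assume "eps i \<in> D"
      then show ?thesis using range unfolding short_low_def by auto
    next
      fix s assume "i < s" "s < j" "ep i s \<in> D"
      then have "(i, s) \<in> plus_low" using range unfolding plus_low_def by auto
      then show ?thesis by (metis UnI1 UnI2 fst_conv image_eqI)
    next
      fix l assume "1 < l" "l < i" "ep l i \<in> D"
      then have "(l, i) \<in> plus_low" using range unfolding plus_low_def by auto
      then show ?thesis by (metis UnI1 UnI2 snd_conv image_eqI)
    next
      fix s assume "j < s" "em i s \<in> D" "ep i s \<in> D"
      then have "(i, s) \<in> pair_across" using range unfolding pair_across_def by auto
      then show ?thesis by (metis UnI2 fst_conv image_eqI)
    qed
  qed
  show "short_low \<union> fst ` plus_low \<union> snd ` plus_low \<union> fst ` pair_across \<subseteq> neg_low"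
  proof
    fix i assume "i \<in> short_low \<union> fst ` plus_low \<union> snd ` plus_low \<union> fst ` pair_across"
    then have "1 < i" "i < j" "low_covered i"
      unfolding short_low_def plus_low_def pair_across_def low_covered_def by auto
    then show "i \<in> neg_low" by (rule covered_neg_low)
  qed
qed

(* The four parts are disjoint and the projections injective, because two roots
   e_a + e_b of D sharing an index coincide and no short root of D shares an index with
   such a root. *)
lemma card_neg_low: "card neg_low = card short_low + 2 * card plus_low + card pair_across"
proof -
  have fin: "finite short_low" "finite plus_low" "finite pair_across"
  proof -
    show "finite short_low" by (rule finite_below_j) (auto simp: short_low_def)
    show "finite plus_low"
      by (rule finite_subset[of _ "{..<j} \<times> {..<j}"]) (auto simp: plus_low_def)
    have "pair_across \<subseteq> {..n} \<times> {..n}"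
      using ep_in_D_range unfolding pair_across_def by fastforce
    then show "finite pair_across" by (rule finite_subset) simp
  qed
  have short_disj: "short_low \<inter> fst ` plus_low = {}" "short_low \<inter> snd ` plus_low = {}"
    "short_low \<inter> fst ` pair_across = {}"
    unfolding short_low_def plus_low_def pair_across_def
    using eps_ep_in_D_disjoint by fastforce+
  have "fst ` plus_low \<inter> snd ` plus_low = {}"
  proof (rule ccontr)
    assume "fst ` plus_low \<inter> snd ` plus_low \<noteq> {}"
    then obtain i s l where "ep i s \<in> D" "ep l i \<in> D" "l < i" "i < s" unfolding plus_low_def by auto
    then show False using ep_in_D_share[of l i i s] by auto
  qed
  moreover have "fst ` plus_low \<inter> fst ` pair_across = {}"
  proof (rule ccontr)
    assume "fst ` plus_low \<inter> fst ` pair_across \<noteq> {}"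
    then obtain i s s' where "ep i s \<in> D" "ep i s' \<in> D" "i < s" "s < j" "j < s'"
      unfolding plus_low_def pair_across_def by auto
    then show False using ep_in_D_share[of i s i s'] by auto
  qed
  moreover have "snd ` plus_low \<inter> fst ` pair_across = {}"
  proof (rule ccontr)
    assume "snd ` plus_low \<inter> fst ` pair_across \<noteq> {}"
    then obtain i l s' where "ep l i \<in> D" "ep i s' \<in> D" "l < i" "i < j" "j < s'"
      unfolding plus_low_def pair_across_def by auto
    then show False using ep_in_D_share[of l i i s'] by auto
  qed
  ultimately have disj: "short_low \<inter> fst ` plus_low = {}"
    "(short_low \<union> fst ` plus_low) \<inter> snd ` plus_low = {}"
    "(short_low \<union> fst ` plus_low \<union> snd ` plus_low) \<inter> fst ` pair_across = {}"
    using short_disj by auto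
  have "inj_on fst plus_low" "inj_on snd plus_low" "inj_on fst pair_across"
    by (rule inj_onI; auto simp: plus_low_def pair_across_def dest: ep_in_D_share)+
  then show ?thesis
    unfolding neg_low_decomp using fin disj by (simp add: card_Un_disjoint card_image)
qed

lemma red_D_iff:
  assumes "\<beta> 1 = 0"
  shows "\<beta> \<in> red_D \<longleftrightarrow> \<beta> \<in> D"
proof
  assume "\<beta> \<in> D"
  moreover have "\<beta> \<noteq> em 1 j" "\<beta> \<noteq> ep 1 j" using assms j_gt_1 by auto
  ultimately show "\<beta> \<in> red_D" using D_outside_red unfolding red_D_def by blast
qed (simp add: red_D_def)

lemma length_formula:
  "weyl_length t n (refl_prod n D) =
     card {\<alpha> \<in> red_roots. refl_prod n red_D \<alpha> \<notin> red_roots} + card (Cols t n 1) + card (Cols t n j)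
     + 4 * card {(l, s). 1 < l \<and> l < s \<and> s < j \<and> (\<lambda>k. eps l k + eps s k) \<in> red_D}
     + 2 * card {(l, s). 1 < l \<and> l < j \<and> j < s \<and> (\<lambda>k. eps l k - eps s k) \<in> red_D \<and> (\<lambda>k. eps l k + eps s k) \<in> red_D}
     + 2 * card {l. 1 < l \<and> l < j \<and> eps l \<in> red_D}"
proof -
  have "{(l, s). 1 < l \<and> l < s \<and> s < j \<and> (\<lambda>k. eps l k + eps s k) \<in> red_D} = plus_low"
    unfolding plus_low_def ep_lam by (auto simp: red_D_iff)
  moreover have "{(l, s). 1 < l \<and> l < j \<and> j < s \<and> (\<lambda>k. eps l k - eps s k) \<in> red_D \<and> (\<lambda>k. eps l k + eps s k) \<in> red_D}
      = pair_across"
    unfolding pair_across_def ep_lam em_lam by (auto simp: red_D_iff)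
  moreover have "{l. 1 < l \<and> l < j \<and> eps l \<in> red_D} = short_low"
    unfolding short_low_def by (auto simp: red_D_iff)
  moreover have "refl_prod n D = refl_sum n D" "refl_prod n red_D = refl_sum n red_D"
    using refl_prod_eq_refl_sum finite_D orth finite_red_D orth_red_D by auto
  moreover have "card (Cols t n 1) = card (col_idx n 1) + card (short_set t {1})"
    "card (Cols t n j) = card (col_idx n j) + card (short_set t {j})"
    using card_Cols[OF not_C] j_gt_1 j_le_n by auto
  ultimately show ?thesis
    using weyl_length_refl_sum reduced_length card_long_inversions card_short_inversions card_neg_low
    by simp
qed

end

(* The theorem: the reduced system and set of its statement are red_roots and red_D. *)
theorem lemma4p3:
  fixes t :: rtype and n j :: nat and D :: "(nat \<Rightarrow> real) set"
  assumes tBD: "t = TypeB \<or> t = TypeD"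
    and DPhi: "D \<subseteq> pos_roots t n"
    and orth: "orthogonal_set n D"
    and A: "assumption_A t n D"
    and j: "1 < j" "j \<le> n"
    and DC1: "D \<inter> Cols t n 1 = {(\<lambda>k. eps 1 k - eps j k), (\<lambda>k. eps 1 k + eps j k)}"
  shows
    "let Phit = pos_roots t n - (Cols t n 1 \<union> Cols t n j \<union> Rows t n (int j) \<union> Rows t n (- int j));
         Dt = D \<inter> Phit;
         sigmat = refl_prod n Dt;
         l' = card {\<alpha> \<in> Phit. sigmat \<alpha> \<notin> Phit}
     in weyl_length t n (refl_prod n D) =
          l' + card (Cols t n 1) + card (Cols t n j)
          + 4 * card {(l, s). 1 < l \<and> l < s \<and> s < j \<and> (\<lambda>k. eps l k + eps s k) \<in> Dt}
          + 2 * card {(l, s). 1 < l \<and> l < j \<and> j < s \<and> (\<lambda>k. eps l k - eps s k) \<in> Dt \<and> (\<lambda>k. eps l k + eps s k) \<in> Dt}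
          + 2 * card {l. 1 < l \<and> l < j \<and> eps l \<in> Dt}"
proof -
  have "em 1 j \<in> D" "ep 1 j \<in> D"
    using DC1 unfolding em_lam ep_lam by auto
  then interpret orth_roots_pair t n D j
    using tBD DPhi orth j by unfold_locales auto
  show ?thesis
    using length_formula unfolding Let_def red_roots_def red_D_def by simp
qed

end
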